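(* Let $r,n\geq1$, let $Z_n=\mathbb{C}^{2n}/((\mathbb{Z}/r\mathbb{Z})\wr S_n)$, let $R_n=\mathbb{C}[x_1,\dots,x_n,y_1,\dots,y_n,z_1,\dots,z_n]$ with $S_n$ acting by simultaneously permuting the indices of the $x_i,y_i,z_i$, and let $I_n=(x_1y_1-z_1^r,\dots,x_ny_n-z_n^r)\subset R_n$. Then \[\mathbb{C}[Z_n]\simeq R_n^{S_n}/I_n^{S_n},\] where $I_n^{S_n}=I_n\cap R_n^{S_n}$; more precisely, the natural map $R_n^{S_n}/I_n^{S_n}\to (R_n/I_n)^{S_n}\simeq \mathbb{C}[Z_n]$ is an isomorphism.
   Context: $(\mathbb{Z}/r\mathbb{Z})\wr S_n$ acts on $\mathbb{C}^{2n}$ with coordinates $(X_i,Y_i)_{i=1}^n$: the $i$-th copy of $\mathbb{Z}/r\mathbb{Z}$ acts by $(X_i,Y_i)\mapsto(\zeta X_i,\zeta^{-1}Y_i)$ ($\zeta^r=1$), and $S_n$ permutes the pairs. The identification $\mathbb{C}[Z_n]=\mathbb{C}[X,Y]^{(\mathbb{Z}/r\mathbb{Z})\wr S_n}\simeq (R_n/I_n)^{S_n}$ is given by $x_i\mapsto X_i^r$, $y_i\mapsto Y_i^r$, $z_i\mapsto X_iY_i$. *)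

theory Defs
  imports "HOL-Library.Poly_Mapping" "HOL-Combinatorics.Permutations" Complex_Main
begin

type_synonym 'v mpoly = "('v \<Rightarrow>\<^sub>0 nat) \<Rightarrow>\<^sub>0 complex"

definition mvar :: "'v \<Rightarrow> 'v mpoly" where
  "mvar v = Poly_Mapping.single (Poly_Mapping.single v 1) 1"

definition mconst :: "complex \<Rightarrow> 'v mpoly" where
  "mconst c = Poly_Mapping.single 0 c"

definition vars :: "'v mpoly \<Rightarrow> 'v set" where
  "vars p = (\<Union>m \<in> Poly_Mapping.keys p. Poly_Mapping.keys m)"

definition subst :: "('v \<Rightarrow> 'w mpoly) \<Rightarrow> 'v mpoly \<Rightarrow> 'w mpoly" where
  "subst s p = (\<Sum>m \<in> Poly_Mapping.keys p.
      mconst (Poly_Mapping.lookup p m) *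
      (\<Prod>v \<in> Poly_Mapping.keys m. s v ^ Poly_Mapping.lookup m v))"

text \<open>Variables of R_n: x_i, y_i, z_i (indices 0..n-1).\<close>
datatype rvar = Xv nat | Yv nat | Zv nat

fun ridx :: "rvar \<Rightarrow> nat" where
  "ridx (Xv i) = i" | "ridx (Yv i) = i" | "ridx (Zv i) = i"

fun rrename :: "(nat \<Rightarrow> nat) \<Rightarrow> rvar \<Rightarrow> rvar" where
  "rrename \<sigma> (Xv i) = Xv (\<sigma> i)" | "rrename \<sigma> (Yv i) = Yv (\<sigma> i)" | "rrename \<sigma> (Zv i) = Zv (\<sigma> i)"

definition Rn :: "nat \<Rightarrow> rvar mpoly set" where
  "Rn n = {p. \<forall>v \<in> vars p. ridx v < n}"

definition permR :: "(nat \<Rightarrow> nat) \<Rightarrow> rvar mpoly \<Rightarrow> rvar mpoly" where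
  "permR \<sigma> p = subst (\<lambda>v. mvar (rrename \<sigma> v)) p"

definition RnS :: "nat \<Rightarrow> rvar mpoly set" where
  "RnS n = {p \<in> Rn n. \<forall>\<sigma>. \<sigma> permutes {..<n} \<longrightarrow> permR \<sigma> p = p}"

definition In :: "nat \<Rightarrow> nat \<Rightarrow> rvar mpoly set" where
  "In r n = {p. \<exists>a. (\<forall>i<n. a i \<in> Rn n) \<and>
      p = (\<Sum>i<n. a i * (mvar (Xv i) * mvar (Yv i) - mvar (Zv i) ^ r))}"

datatype cvar = CX nat | CY nat

fun cidx :: "cvar \<Rightarrow> nat" where
  "cidx (CX i) = i" | "cidx (CY i) = i"

definition Cn :: "nat \<Rightarrow> cvar mpoly set" where
  "Cn n = {q. \<forall>v \<in> vars q. cidx v < n}"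

text \<open>Action of the element ((zeta_i)_i, sigma) of (Z/rZ) wr S_n (zeta_i r-th roots of unity):
  (X_i, Y_i) goes to (zeta_i X_{sigma i}, zeta_i^{-1} Y_{sigma i}).\<close>
definition gact :: "(nat \<Rightarrow> complex) \<Rightarrow> (nat \<Rightarrow> nat) \<Rightarrow> cvar mpoly \<Rightarrow> cvar mpoly" where
  "gact \<zeta> \<sigma> q = subst (\<lambda>v. case v of
       CX i \<Rightarrow> mconst (\<zeta> i) * mvar (CX (\<sigma> i))
     | CY i \<Rightarrow> mconst (inverse (\<zeta> i)) * mvar (CY (\<sigma> i))) q"

text \<open>C[Z_n] = C[X,Y]^{(Z/rZ) wr S_n}.\<close>
definition CZ :: "nat \<Rightarrow> nat \<Rightarrow> cvar mpoly set" where
  "CZ r n = {q \<in> Cn n. \<forall>\<zeta> \<sigma>. \<sigma> permutes {..<n} \<and> (\<forall>i<n. \<zeta> i ^ r = 1)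
      \<longrightarrow> gact \<zeta> \<sigma> q = q}"

definition phi :: "nat \<Rightarrow> rvar mpoly \<Rightarrow> cvar mpoly" where
  "phi r p = subst (\<lambda>v. case v of
       Xv i \<Rightarrow> mvar (CX i) ^ r
     | Yv i \<Rightarrow> mvar (CY i) ^ r
     | Zv i \<Rightarrow> mvar (CX i) * mvar (CY i)) p"

end

theory Submission
  imports Defs
begin

text \<open>
  On monomials, phi sends x^a y^b z^c to X^(r a + c) Y^(r b + c). A monomial X^u Y^v with
  u = v (mod r) has exactly one preimage whose z-exponent is below r, namely
  x^(u div r) y^(v div r) z^(u mod r); sending every monomial to this preimage is a linear
  section of phi. Modulo I_n, replacing z_i^r by x_i y_i reduces every monomial to the section
  of its image, so p is congruent to the section of phi p, and the kernel of phi is I_n.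
  Invariance under the diagonal subgroup (Z/rZ)^n forces the exponents of X_i and Y_i in an
  invariant to agree modulo r, so every invariant is the image of its section. Averaging over
  S_n (possible in characteristic 0) makes that preimage symmetric, and in the same way lifts
  S_n-invariant classes of R_n/I_n to invariants of R_n.
\<close>

section \<open>Substitution and monomial maps\<close>

lemma mconst_add: "mconst (a + b) = (mconst a + mconst b :: 'v mpoly)"
  by (simp add: mconst_def single_add)

lemma mconst_mult: "mconst (a * b) = (mconst a * mconst b :: 'v mpoly)"
  by (simp add: mconst_def mult_single)

lemma mconst_0 [simp]: "mconst 0 = 0"
  by (simp add: mconst_def)

lemma mconst_1 [simp]: "mconst 1 = 1"
  by (simp add: mconst_def)

lemma mconst_power: "mconst (a ^ k) = (mconst a ^ k :: 'v mpoly)"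
  by (induction k) (simp_all add: mconst_mult)

lemma of_nat_eq_mconst: "(of_nat k :: 'v mpoly) = mconst (of_nat k)"
  by (simp add: mconst_def)

lemma mconst_mult_single: "mconst c * Poly_Mapping.single m d = Poly_Mapping.single m (c * d)"
  by (simp add: mconst_def mult_single)

lemma mvar_power: "mvar v ^ k = Poly_Mapping.single (Poly_Mapping.single v k) 1"
  by (induction k) (simp_all add: mvar_def mult_single single_add[symmetric])

lemma poly_mapping_sum_single:
  "(\<Sum>m \<in> Poly_Mapping.keys p. Poly_Mapping.single m (Poly_Mapping.lookup p m)) = p"
  by (rule poly_mapping_eqI) (simp add: lookup_sum lookup_single when_def in_keys_iff)

lemma poly_mapping_add_single_induct [case_names zero add_single]:
  fixes m :: "'a \<Rightarrow>\<^sub>0 'b::monoid_add"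
  assumes "P 0" and "\<And>m v k. P m \<Longrightarrow> P (m + Poly_Mapping.single v k)"
  shows "P m"
proof (induction m rule: update_induct)
  case const
  show ?case by (fact assms(1))
next
  case (update m v k)
  have "Poly_Mapping.update v k m = m + Poly_Mapping.single v k"
    using update.hyps(1)
    by (intro poly_mapping_eqI) (auto simp: lookup_update lookup_add lookup_single when_def in_keys_iff)
  then show ?case using assms(2)[OF update.IH] by simp
qed

definition eval_mon :: "('v \<Rightarrow> 'a::comm_monoid_mult) \<Rightarrow> ('v \<Rightarrow>\<^sub>0 nat) \<Rightarrow> 'a" where
  "eval_mon s m = (\<Prod>v \<in> Poly_Mapping.keys m. s v ^ Poly_Mapping.lookup m v)"

lemma eval_mon_superset:
  assumes "finite K" "Poly_Mapping.keys m \<subseteq> K"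
  shows "eval_mon s m = (\<Prod>v \<in> K. s v ^ Poly_Mapping.lookup m v)"
  unfolding eval_mon_def
  by (rule prod.mono_neutral_left) (use assms in \<open>auto simp: in_keys_iff\<close>)

lemma eval_mon_supported:
  assumes "finite S" "\<And>v. v \<notin> S \<Longrightarrow> s v = 1"
  shows "eval_mon s m = (\<Prod>v \<in> S. s v ^ Poly_Mapping.lookup m v)"
proof -
  have "eval_mon s m = (\<Prod>v \<in> S \<union> Poly_Mapping.keys m. s v ^ Poly_Mapping.lookup m v)"
    using assms(1) by (intro eval_mon_superset) auto
  also have "\<dots> = (\<Prod>v \<in> S. s v ^ Poly_Mapping.lookup m v)"
    using assms by (intro prod.mono_neutral_right) auto
  finally show ?thesis .
qed

lemma eval_mon_0 [simp]: "eval_mon s 0 = 1"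
  by (simp add: eval_mon_def)

lemma eval_mon_single [simp]: "eval_mon s (Poly_Mapping.single v k) = s v ^ k"
  by (cases "k = 0") (simp_all add: eval_mon_def)

lemma eval_mon_add: "eval_mon s (m1 + m2) = eval_mon s m1 * eval_mon s m2"
proof -
  let ?K = "Poly_Mapping.keys m1 \<union> Poly_Mapping.keys m2"
  have "eval_mon s (m1 + m2) = (\<Prod>v \<in> ?K. s v ^ Poly_Mapping.lookup (m1 + m2) v)"
    by (rule eval_mon_superset) (simp_all add: keys_add)
  also have "\<dots> = (\<Prod>v \<in> ?K. s v ^ Poly_Mapping.lookup m1 v) * (\<Prod>v \<in> ?K. s v ^ Poly_Mapping.lookup m2 v)"
    by (simp add: lookup_add power_add prod.distrib)
  also have "\<dots> = eval_mon s m1 * eval_mon s m2"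
    by (simp add: eval_mon_superset[of ?K m1] eval_mon_superset[of ?K m2])
  finally show ?thesis .
qed

lemma subst_eq_eval_mon:
  "subst s p = (\<Sum>m \<in> Poly_Mapping.keys p. mconst (Poly_Mapping.lookup p m) * eval_mon s m)"
  by (simp add: subst_def eval_mon_def)

lemma subst_superset:
  assumes "finite K" "Poly_Mapping.keys p \<subseteq> K"
  shows "subst s p = (\<Sum>m \<in> K. mconst (Poly_Mapping.lookup p m) * eval_mon s m)"
  unfolding subst_eq_eval_mon
  by (rule sum.mono_neutral_left) (use assms in \<open>auto simp: in_keys_iff\<close>)

lemma subst_add: "subst s (p + q) = subst s p + subst s q"
proof -
  let ?K = "Poly_Mapping.keys p \<union> Poly_Mapping.keys q"
  have "subst s (p + q) = (\<Sum>m \<in> ?K. mconst (Poly_Mapping.lookup (p + q) m) * eval_mon s m)"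
    by (rule subst_superset) (simp_all add: keys_add)
  also have "\<dots> = (\<Sum>m \<in> ?K. mconst (Poly_Mapping.lookup p m) * eval_mon s m)
                + (\<Sum>m \<in> ?K. mconst (Poly_Mapping.lookup q m) * eval_mon s m)"
    by (simp add: lookup_add mconst_add distrib_right sum.distrib)
  also have "\<dots> = subst s p + subst s q"
    by (simp add: subst_superset[of ?K p] subst_superset[of ?K q])
  finally show ?thesis .
qed

lemma subst_0 [simp]: "subst s 0 = 0"
  by (simp add: subst_def)

lemma subst_diff: "subst s (p - q) = subst s p - subst s q"
  using subst_add[of s "p - q" q] by (simp add: eq_diff_eq)

lemma subst_sum: "subst s (\<Sum>i\<in>A. f i) = (\<Sum>i\<in>A. subst s (f i))"
  by (induction A rule: infinite_finite_induct) (simp_all add: subst_add)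

lemma subst_single: "subst s (Poly_Mapping.single m c) = mconst c * eval_mon s m"
  by (subst subst_superset[of "{m}"]) auto

lemma subst_mult: "subst s (p * q) = subst s p * subst s q"
proof -
  let ?P = "Poly_Mapping.keys p" and ?Q = "Poly_Mapping.keys q"
  let ?p = "Poly_Mapping.lookup p" and ?q = "Poly_Mapping.lookup q"
  have "p * q = (\<Sum>a\<in>?P. Poly_Mapping.single a (?p a)) * (\<Sum>b\<in>?Q. Poly_Mapping.single b (?q b))"
    by (simp add: poly_mapping_sum_single)
  also have "\<dots> = (\<Sum>a\<in>?P. \<Sum>b\<in>?Q. Poly_Mapping.single (a + b) (?p a * ?q b))"
    by (simp add: sum_product mult_single)
  finally have "subst s (p * q) = (\<Sum>a\<in>?P. \<Sum>b\<in>?Q. (mconst (?p a) * eval_mon s a) * (mconst (?q b) * eval_mon s b))"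
    by (simp add: subst_sum subst_single eval_mon_add mconst_mult ac_simps)
  also have "\<dots> = subst s p * subst s q"
    by (simp add: sum_product subst_eq_eval_mon)
  finally show ?thesis .
qed

lemma subst_mconst [simp]: "subst s (mconst c) = mconst c"
  by (simp add: mconst_def subst_single)

lemma subst_1 [simp]: "subst s 1 = 1"
  using subst_mconst[of s 1] by simp

lemma subst_mvar [simp]: "subst s (mvar v) = s v"
  by (simp add: mvar_def subst_single)

lemma subst_power: "subst s (p ^ k) = subst s p ^ k"
  by (induction k) (simp_all add: subst_mult)

lemma subst_prod: "subst s (\<Prod>i\<in>A. f i) = (\<Prod>i\<in>A. subst s (f i))"
  by (induction A rule: infinite_finite_induct) (simp_all add: subst_mult)

lemma subst_eval_mon: "subst s (eval_mon t m) = eval_mon (\<lambda>v. subst s (t v)) m"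
  by (simp add: eval_mon_def subst_prod subst_power)

lemma subst_subst: "subst s (subst t p) = subst (\<lambda>v. subst s (t v)) p"
  unfolding subst_eq_eval_mon[of t]
  by (simp add: subst_sum subst_mult subst_eval_mon) (simp add: subst_eq_eval_mon)

lemma subst_cong:
  assumes "\<And>v. v \<in> vars p \<Longrightarrow> s v = t v"
  shows "subst s p = subst t p"
  unfolding subst_eq_eval_mon eval_mon_def
  by (intro sum.cong prod.cong refl arg_cong2[where f = "(*)"] arg_cong2[where f = power])
     (use assms in \<open>auto simp: vars_def\<close>)

definition map_mon :: "('a \<Rightarrow> 'b) \<Rightarrow> ('a \<Rightarrow>\<^sub>0 'c::comm_monoid_add) \<Rightarrow> ('b \<Rightarrow>\<^sub>0 'c)" where
  "map_mon f p = (\<Sum>m \<in> Poly_Mapping.keys p. Poly_Mapping.single (f m) (Poly_Mapping.lookup p m))"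

lemma map_mon_superset:
  assumes "finite K" "Poly_Mapping.keys p \<subseteq> K"
  shows "map_mon f p = (\<Sum>m \<in> K. Poly_Mapping.single (f m) (Poly_Mapping.lookup p m))"
  unfolding map_mon_def
  by (rule sum.mono_neutral_left) (use assms in \<open>auto simp: in_keys_iff\<close>)

lemma map_mon_add: "map_mon f (p + q) = map_mon f p + map_mon f q"
proof -
  let ?K = "Poly_Mapping.keys p \<union> Poly_Mapping.keys q"
  have "map_mon f (p + q) = (\<Sum>m \<in> ?K. Poly_Mapping.single (f m) (Poly_Mapping.lookup (p + q) m))"
    by (rule map_mon_superset) (simp_all add: keys_add)
  also have "\<dots> = map_mon f p + map_mon f q"
    by (simp add: lookup_add single_add sum.distrib map_mon_superset[of ?K p] map_mon_superset[of ?K q])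
  finally show ?thesis .
qed

lemma map_mon_0 [simp]: "map_mon f 0 = 0"
  by (simp add: map_mon_def)

lemma map_mon_single [simp]: "map_mon f (Poly_Mapping.single m c) = Poly_Mapping.single (f m) c"
  by (subst map_mon_superset[of "{m}"]) auto

lemma map_mon_sum: "map_mon f (\<Sum>i\<in>A. g i) = (\<Sum>i\<in>A. map_mon f (g i))"
  by (induction A rule: infinite_finite_induct) (simp_all add: map_mon_add)

lemma map_mon_map_mon: "map_mon g (map_mon f p) = map_mon (g \<circ> f) p"
  by (simp add: map_mon_def[of f] map_mon_sum) (simp add: map_mon_def)

lemma map_mon_cong:
  "(\<And>m. m \<in> Poly_Mapping.keys p \<Longrightarrow> f m = g m) \<Longrightarrow> map_mon f p = map_mon g p"
  unfolding map_mon_def by (rule sum.cong) simp_all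

lemma map_mon_id [simp]: "map_mon id p = p"
  by (simp add: map_mon_def poly_mapping_sum_single)

lemma keys_map_mon: "Poly_Mapping.keys (map_mon f p) \<subseteq> f ` Poly_Mapping.keys p"
  using keys_sum[of "\<lambda>m. Poly_Mapping.single (f m) (Poly_Mapping.lookup p m)" "Poly_Mapping.keys p"]
  unfolding map_mon_def by (auto split: if_splits)

definition polys_in :: "('v \<Rightarrow> bool) \<Rightarrow> 'v mpoly set" where
  "polys_in P = {p. \<forall>v \<in> vars p. P v}"

lemma polys_in_iff:
  "p \<in> polys_in P \<longleftrightarrow> (\<forall>m \<in> Poly_Mapping.keys p. \<forall>v \<in> Poly_Mapping.keys m. P v)"
  by (auto simp: polys_in_def vars_def)

lemma polys_in_0 [simp]: "0 \<in> polys_in P"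
  by (simp add: polys_in_iff)

lemma polys_in_add: "p \<in> polys_in P \<Longrightarrow> q \<in> polys_in P \<Longrightarrow> p + q \<in> polys_in P"
  using keys_add[of p q] unfolding polys_in_iff by blast

lemma polys_in_mult:
  assumes "p \<in> polys_in P" "q \<in> polys_in P"
  shows "p * q \<in> polys_in P"
  unfolding polys_in_iff
proof (intro ballI)
  fix m v assume "m \<in> Poly_Mapping.keys (p * q)" "v \<in> Poly_Mapping.keys m"
  moreover from \<open>m \<in> Poly_Mapping.keys (p * q)\<close> obtain a b
    where "m = a + b" "a \<in> Poly_Mapping.keys p" "b \<in> Poly_Mapping.keys q"
    using keys_mult[of p q] by blast
  ultimately show "P v"
    using assms keys_add[of a b] unfolding polys_in_iff by blast
qed

lemma polys_in_single:
  "(\<And>v. v \<in> Poly_Mapping.keys m \<Longrightarrow> P v) \<Longrightarrow> Poly_Mapping.single m c \<in> polys_in P"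
  unfolding polys_in_iff by simp

lemma polys_in_mconst [simp]: "mconst c \<in> polys_in P"
  unfolding mconst_def by (rule polys_in_single) simp

lemma polys_in_mvar: "P v \<Longrightarrow> mvar v \<in> polys_in P"
  unfolding mvar_def by (rule polys_in_single) simp

lemma polys_in_sum: "(\<And>i. i \<in> A \<Longrightarrow> f i \<in> polys_in P) \<Longrightarrow> (\<Sum>i\<in>A. f i) \<in> polys_in P"
  by (induction A rule: infinite_finite_induct) (auto intro: polys_in_add)

lemma polys_in_1 [simp]: "1 \<in> polys_in P"
  using polys_in_mconst[of 1 P] by simp

lemma polys_in_prod: "(\<And>i. i \<in> A \<Longrightarrow> f i \<in> polys_in P) \<Longrightarrow> (\<Prod>i\<in>A. f i) \<in> polys_in P"
  by (induction A rule: infinite_finite_induct) (auto intro: polys_in_mult)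

lemma polys_in_power: "p \<in> polys_in P \<Longrightarrow> p ^ k \<in> polys_in P"
  by (induction k) (auto intro: polys_in_mult)

lemma polys_in_subst:
  assumes "\<And>v. v \<in> vars p \<Longrightarrow> s v \<in> polys_in Q"
  shows "subst s p \<in> polys_in Q"
  unfolding subst_def
  by (intro polys_in_sum polys_in_mult polys_in_prod polys_in_power polys_in_mconst assms)
    (auto simp: vars_def)

section \<open>The ideal I_n and averaging over S_n\<close>

lemma Rn_eq_polys_in: "Rn n = polys_in (\<lambda>v. ridx v < n)"
  by (simp add: Rn_def polys_in_def)

lemma Cn_eq_polys_in: "Cn n = polys_in (\<lambda>v. cidx v < n)"
  by (simp add: Cn_def polys_in_def)

definition In_gen :: "nat \<Rightarrow> nat \<Rightarrow> rvar mpoly" where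
  "In_gen r i = mvar (Xv i) * mvar (Yv i) - mvar (Zv i) ^ r"

lemma In_eq: "In r n = {p. \<exists>a. (\<forall>i<n. a i \<in> Rn n) \<and> p = (\<Sum>i<n. a i * In_gen r i)}"
  by (simp add: In_def In_gen_def)

lemma In_add:
  assumes "p \<in> In r n" "q \<in> In r n"
  shows "p + q \<in> In r n"
proof -
  obtain a b where "\<forall>i<n. a i \<in> Rn n" "p = (\<Sum>i<n. a i * In_gen r i)"
    and "\<forall>i<n. b i \<in> Rn n" "q = (\<Sum>i<n. b i * In_gen r i)"
    using assms unfolding In_eq by blast
  then show ?thesis
    unfolding In_eq
    by (intro CollectI exI[of _ "\<lambda>i. a i + b i"])
      (auto simp: Rn_eq_polys_in polys_in_add sum.distrib distrib_right)
qed

lemma In_mult: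
  assumes "b \<in> Rn n" "p \<in> In r n"
  shows "b * p \<in> In r n"
proof -
  obtain a where "\<forall>i<n. a i \<in> Rn n" "p = (\<Sum>i<n. a i * In_gen r i)"
    using assms(2) unfolding In_eq by blast
  then show ?thesis
    unfolding In_eq using assms(1)
    by (intro CollectI exI[of _ "\<lambda>i. b * a i"])
      (auto simp: Rn_eq_polys_in polys_in_mult sum_distrib_left mult.assoc)
qed

lemma In_0 [simp]: "0 \<in> In r n"
  unfolding In_eq by (intro CollectI exI[of _ "\<lambda>_. 0"]) (simp add: Rn_eq_polys_in)

lemma In_uminus:
  assumes "p \<in> In r n"
  shows "- p \<in> In r n"
proof -
  have "mconst (- 1) * p = - p"
    by (simp add: mconst_def single_uminus)
  then show ?thesis
    using In_mult[of "mconst (- 1)" n p r] assms by (simp add: Rn_eq_polys_in)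
qed

lemma In_sum: "(\<And>i. i \<in> A \<Longrightarrow> f i \<in> In r n) \<Longrightarrow> (\<Sum>i\<in>A. f i) \<in> In r n"
  by (induction A rule: infinite_finite_induct) (auto intro: In_add)

lemma In_gen_in_In: "i < n \<Longrightarrow> In_gen r i \<in> In r n"
  unfolding In_eq
  by (intro CollectI exI[of _ "\<lambda>j. if j = i then 1 else 0"])
    (simp add: Rn_eq_polys_in if_distrib[of "\<lambda>x. x * _"] cong: if_cong)

lemma rrename_rrename: "rrename \<tau> (rrename \<sigma> v) = rrename (\<tau> \<circ> \<sigma>) v"
  by (cases v) simp_all

lemma ridx_rrename: "ridx (rrename \<sigma> v) = \<sigma> (ridx v)"
  by (cases v) simp_all

lemma permR_permR: "permR \<tau> (permR \<sigma> p) = permR (\<tau> \<circ> \<sigma>) p"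
  by (simp add: permR_def subst_subst rrename_rrename)

lemma permR_in_Rn:
  assumes "\<sigma> permutes {..<n}" "p \<in> Rn n"
  shows "permR \<sigma> p \<in> Rn n"
  unfolding permR_def Rn_eq_polys_in
proof (intro polys_in_subst polys_in_mvar)
  fix v assume "v \<in> vars p"
  then show "ridx (rrename \<sigma> v) < n"
    using assms permutes_in_image[of \<sigma> "{..<n}" "ridx v"]
    by (auto simp: ridx_rrename Rn_def)
qed

lemma permR_mult: "permR \<sigma> (p * q) = permR \<sigma> p * permR \<sigma> q"
  by (simp add: permR_def subst_mult)

lemma permR_sum: "permR \<sigma> (\<Sum>i\<in>A. f i) = (\<Sum>i\<in>A. permR \<sigma> (f i))"
  by (simp add: permR_def subst_sum)

lemma permR_mconst [simp]: "permR \<sigma> (mconst c) = mconst c"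
  by (simp add: permR_def)

definition symmetrize :: "nat \<Rightarrow> rvar mpoly \<Rightarrow> rvar mpoly" where
  "symmetrize n p = mconst (1 / fact n) * (\<Sum>\<sigma> | \<sigma> permutes {..<n}. permR \<sigma> p)"

lemma mean_over_permutations:
  "mconst (1 / fact n) * (\<Sum>\<sigma> | \<sigma> permutes {..<n}. q) = (q :: 'v mpoly)"
proof -
  have "(\<Sum>\<sigma> | \<sigma> permutes {..<n}. q) = mconst (fact n) * q"
    by (simp add: card_permutations of_nat_eq_mconst)
  then show ?thesis
    by (simp add: mult.assoc[symmetric] mconst_mult[symmetric])
qed

lemma symmetrize_in_RnS:
  assumes "p \<in> Rn n"
  shows "symmetrize n p \<in> RnS n"
  unfolding RnS_def
proof (intro CollectI conjI allI impI)
  show "symmetrize n p \<in> Rn n"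
    using permR_in_Rn[OF _ assms]
    by (auto simp: symmetrize_def Rn_eq_polys_in intro!: polys_in_mult polys_in_sum)
  fix \<tau> assume "\<tau> permutes {..<n}"
  then have "(\<Sum>\<sigma> | \<sigma> permutes {..<n}. permR (\<tau> \<circ> \<sigma>) p) = (\<Sum>\<sigma> | \<sigma> permutes {..<n}. permR \<sigma> p)"
    by (rule setum_permutations_compose_left[symmetric])
  then show "permR \<tau> (symmetrize n p) = symmetrize n p"
    by (simp add: symmetrize_def permR_mult permR_sum permR_permR)
qed

lemma diff_symmetrize_in_In:
  assumes "\<And>\<sigma>. \<sigma> permutes {..<n} \<Longrightarrow> permR \<sigma> p - p \<in> In r n"
  shows "p - symmetrize n p \<in> In r n"
proof -
  have "p - symmetrize n p = mconst (1 / fact n) * (\<Sum>\<sigma> | \<sigma> permutes {..<n}. p) - symmetrize n p"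
    by (simp only: mean_over_permutations)
  also have "\<dots> = mconst (1 / fact n) * (\<Sum>\<sigma> | \<sigma> permutes {..<n}. - (permR \<sigma> p - p))"
    by (simp only: symmetrize_def minus_diff_eq sum_subtractf right_diff_distrib)
  also have "\<dots> \<in> In r n"
    using assms by (intro In_mult In_sum In_uminus) (auto simp: Rn_eq_polys_in)
  finally show ?thesis .
qed

section \<open>Monomials under phi\<close>

fun phi_var :: "nat \<Rightarrow> rvar \<Rightarrow> cvar mpoly" where
  "phi_var r (Xv i) = mvar (CX i) ^ r"
| "phi_var r (Yv i) = mvar (CY i) ^ r"
| "phi_var r (Zv i) = mvar (CX i) * mvar (CY i)"

lemma phi_eq_subst: "phi r = subst (phi_var r)"
proof -
  have "(\<lambda>v. case v of Xv i \<Rightarrow> mvar (CX i) ^ r | Yv i \<Rightarrow> mvar (CY i) ^ r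
                    | Zv i \<Rightarrow> mvar (CX i) * mvar (CY i)) = phi_var r"
    by (rule ext, case_tac v) simp_all
  then show ?thesis
    by (simp add: phi_def[abs_def])
qed

lift_definition phi_exp :: "nat \<Rightarrow> (rvar \<Rightarrow>\<^sub>0 nat) \<Rightarrow> (cvar \<Rightarrow>\<^sub>0 nat)" is
  "\<lambda>r m v. case v of CX i \<Rightarrow> r * m (Xv i) + m (Zv i) | CY i \<Rightarrow> r * m (Yv i) + m (Zv i)"
proof -
  fix r and m :: "rvar \<Rightarrow> nat"
  assume "finite {w. m w \<noteq> 0}"
  then have "finite (Xv -` {w. m w \<noteq> 0} \<union> Yv -` {w. m w \<noteq> 0} \<union> Zv -` {w. m w \<noteq> 0})"
    by (intro finite_UnI finite_vimageI) (simp_all add: inj_def)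
  then have "finite (CX ` (Xv -` {w. m w \<noteq> 0} \<union> Yv -` {w. m w \<noteq> 0} \<union> Zv -` {w. m w \<noteq> 0})
    \<union> CY ` (Xv -` {w. m w \<noteq> 0} \<union> Yv -` {w. m w \<noteq> 0} \<union> Zv -` {w. m w \<noteq> 0}))"
    by blast
  then show "finite {v. (case v of CX i \<Rightarrow> r * m (Xv i) + m (Zv i) | CY i \<Rightarrow> r * m (Yv i) + m (Zv i)) \<noteq> 0}"
    by (rule finite_subset[rotated]) (rule subsetI, case_tac x, auto)
qed

lemma lookup_phi_exp [simp]:
  "Poly_Mapping.lookup (phi_exp r m) (CX i) = r * Poly_Mapping.lookup m (Xv i) + Poly_Mapping.lookup m (Zv i)"
  "Poly_Mapping.lookup (phi_exp r m) (CY i) = r * Poly_Mapping.lookup m (Yv i) + Poly_Mapping.lookup m (Zv i)"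
  by (simp_all add: phi_exp.rep_eq)

lemma phi_exp_add: "phi_exp r (m1 + m2) = phi_exp r m1 + phi_exp r m2"
  by (rule poly_mapping_eqI, case_tac k) (simp_all add: lookup_add algebra_simps)

lemma phi_var_power: "phi_var r v ^ k = Poly_Mapping.single (phi_exp r (Poly_Mapping.single v k)) 1"
proof (cases v)
  case (Xv i)
  have "phi_exp r (Poly_Mapping.single v k) = Poly_Mapping.single (CX i) (r * k)"
    using Xv by (intro poly_mapping_eqI, case_tac ka) (auto simp: lookup_single when_def)
  moreover have "phi_var r v ^ k = mvar (CX i) ^ (r * k)"
    using Xv by (simp add: power_mult)
  ultimately show ?thesis
    by (simp add: mvar_power)
next
  case (Yv i)
  have "phi_exp r (Poly_Mapping.single v k) = Poly_Mapping.single (CY i) (r * k)"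
    using Yv by (intro poly_mapping_eqI, case_tac ka) (auto simp: lookup_single when_def)
  moreover have "phi_var r v ^ k = mvar (CY i) ^ (r * k)"
    using Yv by (simp add: power_mult)
  ultimately show ?thesis
    by (simp add: mvar_power)
next
  case (Zv i)
  have "phi_exp r (Poly_Mapping.single v k) = Poly_Mapping.single (CX i) k + Poly_Mapping.single (CY i) k"
    using Zv by (intro poly_mapping_eqI, case_tac ka) (auto simp: lookup_single lookup_add when_def)
  then show ?thesis
    using Zv by (simp add: power_mult_distrib mvar_power mult_single)
qed

lemma eval_mon_phi_var: "eval_mon (phi_var r) m = Poly_Mapping.single (phi_exp r m) 1"
proof (induction m rule: poly_mapping_add_single_induct)
  case zero
  have "phi_exp r 0 = 0"
    by (rule poly_mapping_eqI, case_tac k) simp_all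
  then show ?case by simp
next
  case (add_single m v k)
  then show ?case
    by (simp add: eval_mon_add phi_var_power phi_exp_add mult_single)
qed

lemma phi_eq_map_mon: "phi r = map_mon (phi_exp r)"
  by (simp add: fun_eq_iff phi_eq_subst subst_eq_eval_mon eval_mon_phi_var mconst_mult_single map_mon_def)

lift_definition lift_exp :: "nat \<Rightarrow> (cvar \<Rightarrow>\<^sub>0 nat) \<Rightarrow> (rvar \<Rightarrow>\<^sub>0 nat)" is
  "\<lambda>r a w. case w of Xv i \<Rightarrow> a (CX i) div r | Yv i \<Rightarrow> a (CY i) div r | Zv i \<Rightarrow> a (CX i) mod r"
proof -
  fix r and a :: "cvar \<Rightarrow> nat"
  assume "finite {v. a v \<noteq> 0}"
  then have "finite (CX -` {v. a v \<noteq> 0} \<union> CY -` {v. a v \<noteq> 0})"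
    by (intro finite_UnI finite_vimageI) (simp_all add: inj_def)
  then have "finite (Xv ` (CX -` {v. a v \<noteq> 0} \<union> CY -` {v. a v \<noteq> 0})
    \<union> Yv ` (CX -` {v. a v \<noteq> 0} \<union> CY -` {v. a v \<noteq> 0})
    \<union> Zv ` (CX -` {v. a v \<noteq> 0} \<union> CY -` {v. a v \<noteq> 0}))"
    by blast
  then show "finite {w. (case w of Xv i \<Rightarrow> a (CX i) div r | Yv i \<Rightarrow> a (CY i) div r
                                  | Zv i \<Rightarrow> a (CX i) mod r) \<noteq> 0}"
    by (rule finite_subset[rotated])
      (rule subsetI, case_tac x, auto simp: image_iff div_greater_zero_iff mod_greater_zero_iff_not_dvd intro: gr0I)
qed

lemma lookup_lift_exp [simp]:
  "Poly_Mapping.lookup (lift_exp r a) (Xv i) = Poly_Mapping.lookup a (CX i) div r"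
  "Poly_Mapping.lookup (lift_exp r a) (Yv i) = Poly_Mapping.lookup a (CY i) div r"
  "Poly_Mapping.lookup (lift_exp r a) (Zv i) = Poly_Mapping.lookup a (CX i) mod r"
  by (simp_all add: lift_exp.rep_eq)

lemma ridx_keys_lift_exp:
  assumes "w \<in> Poly_Mapping.keys (lift_exp r a)"
  shows "\<exists>v \<in> Poly_Mapping.keys a. cidx v = ridx w"
proof -
  have "CX (ridx w) \<in> Poly_Mapping.keys a \<or> CY (ridx w) \<in> Poly_Mapping.keys a"
    using assms by (cases w) (auto simp: in_keys_iff div_greater_zero_iff mod_greater_zero_iff_not_dvd intro: gr0I)
  then show ?thesis
    by (metis cidx.simps)
qed

lemma phi_exp_lift_exp:
  assumes "\<And>i. Poly_Mapping.lookup a (CX i) mod r = Poly_Mapping.lookup a (CY i) mod r"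
  shows "phi_exp r (lift_exp r a) = a"
proof (rule poly_mapping_eqI)
  fix v show "Poly_Mapping.lookup (phi_exp r (lift_exp r a)) v = Poly_Mapping.lookup a v"
    using assms by (cases v) (simp_all, metis div_mult_mod_eq mult.commute)
qed

lemma lift_exp_phi_exp:
  assumes "\<And>i. Poly_Mapping.lookup m (Zv i) < r"
  shows "lift_exp r (phi_exp r m) = m"
proof (rule poly_mapping_eqI)
  have "r \<noteq> 0"
    using assms[of 0] by simp
  fix w show "Poly_Mapping.lookup (lift_exp r (phi_exp r m)) w = Poly_Mapping.lookup m w"
    using assms \<open>r \<noteq> 0\<close> by (cases w) (simp_all add: div_mult_self4)
qed

section \<open>The kernel of phi\<close>

lemma phi_vanishes_on_In:
  assumes "p \<in> In r n"
  shows "phi r p = 0"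
proof -
  have "phi r (In_gen r i) = 0" for i
    by (simp add: phi_eq_subst In_gen_def subst_diff subst_mult subst_power power_mult_distrib)
  then show ?thesis
    using assms unfolding In_eq by (auto simp: phi_eq_subst subst_sum subst_mult)
qed

lemma single_minus_lift_exp_phi_exp_in_In:
  assumes "r \<ge> 1" "\<forall>v \<in> Poly_Mapping.keys m. ridx v < n"
  shows "Poly_Mapping.single m 1 - Poly_Mapping.single (lift_exp r (phi_exp r m)) 1 \<in> In r n"
  using assms(2)
proof (induction "\<Sum>i<n. Poly_Mapping.lookup m (Zv i)" arbitrary: m rule: less_induct)
  \<comment> \<open>Trading z_i^r for x_i y_i preserves the class modulo I_n and the image under phi_exp,
    while the total z-degree drops.\<close>
  case less
  show ?case
  proof (cases "\<forall>i. Poly_Mapping.lookup m (Zv i) < r")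
    case True
    then show ?thesis by (simp add: lift_exp_phi_exp)
  next
    case False
    then obtain i where ge: "r \<le> Poly_Mapping.lookup m (Zv i)"
      by (auto simp: not_less)
    then have "Zv i \<in> Poly_Mapping.keys m"
      using assms(1) by (auto simp: in_keys_iff)
    then have i: "i < n"
      using less.prems by force
    define m1 where "m1 = m - Poly_Mapping.single (Zv i) r"
    define m2 where "m2 = m1 + Poly_Mapping.single (Xv i) 1 + Poly_Mapping.single (Yv i) 1"
    have m: "m = m1 + Poly_Mapping.single (Zv i) r"
      using ge by (intro poly_mapping_eqI) (auto simp: m1_def lookup_add lookup_minus lookup_single when_def)
    have "Poly_Mapping.keys m1 \<subseteq> Poly_Mapping.keys m"
      by (auto simp: m1_def in_keys_iff lookup_minus)
    then have m1_vars: "\<forall>v \<in> Poly_Mapping.keys m1. ridx v < n"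
      using less.prems by blast
    moreover have "Poly_Mapping.keys m2 \<subseteq> Poly_Mapping.keys m1 \<union> {Xv i, Yv i}"
      using keys_add[of "m1 + Poly_Mapping.single (Xv i) 1" "Poly_Mapping.single (Yv i) 1"]
        keys_add[of m1 "Poly_Mapping.single (Xv i) 1"]
      unfolding m2_def by auto
    ultimately have m2_vars: "\<forall>v \<in> Poly_Mapping.keys m2. ridx v < n"
      using i by auto
    have "(\<Sum>j<n. Poly_Mapping.lookup m (Zv j)) = (\<Sum>j<n. Poly_Mapping.lookup m2 (Zv j)) + r"
      using i by (subst m) (simp add: m2_def lookup_add lookup_single when_def sum.distrib)
    with assms(1) have "(\<Sum>j<n. Poly_Mapping.lookup m2 (Zv j)) < (\<Sum>j<n. Poly_Mapping.lookup m (Zv j))"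
      by simp
    from less.hyps[OF this m2_vars]
    have IH: "Poly_Mapping.single m2 1 - Poly_Mapping.single (lift_exp r (phi_exp r m2)) 1 \<in> In r n" .
    have same_image: "phi_exp r m2 = phi_exp r m"
      by (subst m, rule poly_mapping_eqI, case_tac k)
        (simp_all add: m2_def lookup_add lookup_single when_def)
    have "Poly_Mapping.single m 1 - Poly_Mapping.single m2 1 = - (Poly_Mapping.single m1 1 * In_gen r i)"
    proof -
      have "Poly_Mapping.single m (1 :: complex) = Poly_Mapping.single m1 1 * mvar (Zv i) ^ r"
        by (subst m) (simp add: mvar_power mult_single)
      moreover have "Poly_Mapping.single m2 (1 :: complex) = Poly_Mapping.single m1 1 * (mvar (Xv i) * mvar (Yv i))"
        by (simp add: m2_def mvar_def mult_single add.assoc)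
      ultimately show ?thesis
        by (simp add: In_gen_def algebra_simps)
    qed
    also have "\<dots> \<in> In r n"
      using m1_vars i by (intro In_uminus In_mult In_gen_in_In) (auto simp: Rn_eq_polys_in intro: polys_in_single)
    finally have "(Poly_Mapping.single m 1 - Poly_Mapping.single m2 1)
        + (Poly_Mapping.single m2 1 - Poly_Mapping.single (lift_exp r (phi_exp r m2)) 1) \<in> In r n"
      using IH by (rule In_add)
    then show ?thesis
      by (simp add: same_image)
  qed
qed

lemma diff_lift_phi_in_In:
  assumes "r \<ge> 1" "p \<in> Rn n"
  shows "p - map_mon (lift_exp r) (phi r p) \<in> In r n"
proof -
  have "p - map_mon (lift_exp r) (phi r p) = map_mon id p - map_mon (lift_exp r \<circ> phi_exp r) p"
    by (simp add: phi_eq_map_mon map_mon_map_mon)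
  also have "\<dots> = (\<Sum>m \<in> Poly_Mapping.keys p. mconst (Poly_Mapping.lookup p m) *
      (Poly_Mapping.single m 1 - Poly_Mapping.single (lift_exp r (phi_exp r m)) 1))"
    by (simp add: map_mon_def sum_subtractf right_diff_distrib mconst_mult_single)
  also have "\<dots> \<in> In r n"
  proof (intro In_sum In_mult)
    fix m assume "m \<in> Poly_Mapping.keys p"
    then show "Poly_Mapping.single m 1 - Poly_Mapping.single (lift_exp r (phi_exp r m)) 1 \<in> In r n"
      using assms by (intro single_minus_lift_exp_phi_exp_in_In) (auto simp: Rn_eq_polys_in polys_in_iff)
  qed (simp add: Rn_eq_polys_in)
  finally show ?thesis .
qed

section \<open>Invariants of the wreath product\<close>

fun crename :: "(nat \<Rightarrow> nat) \<Rightarrow> cvar \<Rightarrow> cvar" where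
  "crename \<sigma> (CX i) = CX (\<sigma> i)"
| "crename \<sigma> (CY i) = CY (\<sigma> i)"

fun cweight :: "(nat \<Rightarrow> complex) \<Rightarrow> cvar \<Rightarrow> complex" where
  "cweight \<zeta> (CX i) = \<zeta> i"
| "cweight \<zeta> (CY i) = inverse (\<zeta> i)"

lemma crename_id [simp]: "crename id v = v"
  by (cases v) simp_all

lemma gact_eq_subst: "gact \<zeta> \<sigma> = subst (\<lambda>v. mconst (cweight \<zeta> v) * mvar (crename \<sigma> v))"
proof -
  have "(\<lambda>v. case v of CX i \<Rightarrow> mconst (\<zeta> i) * mvar (CX (\<sigma> i))
                    | CY i \<Rightarrow> mconst (inverse (\<zeta> i)) * mvar (CY (\<sigma> i)))
      = (\<lambda>v. mconst (cweight \<zeta> v) * mvar (crename \<sigma> v))"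
    by (rule ext, case_tac v) simp_all
  then show ?thesis
    by (simp add: gact_def[abs_def])
qed

lemma gact_phi:
  assumes "\<forall>i<n. \<zeta> i ^ r = 1" "r \<ge> 1" "p \<in> Rn n"
  shows "gact \<zeta> \<sigma> (phi r p) = phi r (permR \<sigma> p)"
proof -
  let ?g = "\<lambda>v. mconst (cweight \<zeta> v) * mvar (crename \<sigma> v)"
  have "subst ?g (phi_var r v) = phi_var r (rrename \<sigma> v)" if "ridx v < n" for v
  proof -
    have root: "\<zeta> (ridx v) ^ r = 1"
      using assms(1) that by blast
    show ?thesis
    proof (cases v)
      case (Xv i)
      with root show ?thesis
        by (simp add: subst_power power_mult_distrib flip: mconst_power)
    next
      case (Yv i)
      with root show ?thesis
        by (simp add: subst_power power_mult_distrib power_inverse flip: mconst_power)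
    next
      case (Zv i)
      with root assms(2) have "\<zeta> i \<noteq> 0"
        by (auto simp: power_0_left)
      then have "mconst (\<zeta> i) * mconst (inverse (\<zeta> i)) = (1 :: cvar mpoly)"
        by (simp flip: mconst_mult)
      moreover have "subst ?g (phi_var r v)
          = mconst (\<zeta> i) * mconst (inverse (\<zeta> i)) * (mvar (CX (\<sigma> i)) * mvar (CY (\<sigma> i)))"
        using Zv by (simp add: subst_mult ac_simps)
      ultimately show ?thesis
        using Zv by simp
    qed
  qed
  then have "subst (\<lambda>v. subst ?g (phi_var r v)) p = subst (\<lambda>v. phi_var r (rrename \<sigma> v)) p"
    using assms(3) by (intro subst_cong) (auto simp: Rn_def)
  then show ?thesis
    by (simp add: gact_eq_subst phi_eq_subst permR_def subst_subst)
qed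

lemma lookup_subst_scaling:
  "Poly_Mapping.lookup (subst (\<lambda>v. mconst (c v) * mvar v) q) a = Poly_Mapping.lookup q a * eval_mon c a"
proof -
  have mon: "eval_mon (\<lambda>v. mconst (c v) * mvar v) b = Poly_Mapping.single b (eval_mon c b)" for b
  proof (induction b rule: poly_mapping_add_single_induct)
    case (add_single b v k)
    then show ?case
      by (simp add: eval_mon_add power_mult_distrib mvar_power mult_single mconst_mult_single
          flip: mconst_power)
  qed simp
  have "Poly_Mapping.lookup (subst (\<lambda>v. mconst (c v) * mvar v) q) a
      = (\<Sum>b \<in> Poly_Mapping.keys q. Poly_Mapping.lookup q b * eval_mon c b when b = a)"
    by (simp add: subst_eq_eval_mon mon mconst_mult_single lookup_sum lookup_single eq_commute)
  also have "\<dots> = Poly_Mapping.lookup q a * eval_mon c a"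
    by (simp add: when_def in_keys_iff)
  finally show ?thesis .
qed

lemma cis_2pi_div_power:
  assumes "r > 0"
  shows "cis (2 * pi / r) ^ r = 1"
proof -
  have "cis (2 * pi / r) ^ r = cis (2 * pi)"
    using assms by (simp add: DeMoivre)
  also have "\<dots> = 1"
    by (simp add: complex_eq_iff)
  finally show ?thesis .
qed

lemma cis_power_eq_imp_mod_eq:
  fixes a b r :: nat
  assumes "r > 0" "cis (2 * pi / r) ^ a = cis (2 * pi / r) ^ b"
  shows "a mod r = b mod r"
proof -
  note root = cis_2pi_div_power[OF assms(1)]
  have "cis (2 * pi / r) ^ k = cis (2 * pi * real (k mod r) / real r)" for k
  proof -
    have "cis (2 * pi / r) ^ k = (cis (2 * pi / r) ^ r) ^ (k div r) * cis (2 * pi / r) ^ (k mod r)"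
      by (simp add: power_mult[symmetric] power_add[symmetric])
    also have "\<dots> = cis (2 * pi / r) ^ (k mod r)"
      by (simp only: root power_one mult_1_left)
    also have "\<dots> = cis (2 * pi * real (k mod r) / real r)"
      by (simp add: DeMoivre mult.commute)
    finally show ?thesis .
  qed
  then have "cis (2 * pi * real (a mod r) / real r) = cis (2 * pi * real (b mod r) / real r)"
    using assms(2) by simp
  moreover have "inj_on (\<lambda>k. cis (2 * pi * real k / real r)) {..<r}"
    using bij_betw_roots_unity[OF assms(1)] by (rule bij_betw_imp_inj_on)
  ultimately show ?thesis
    using assms(1) by (auto dest: inj_onD)
qed

lemma CZ_exponents_congruent:
  assumes "r \<ge> 1" "q \<in> CZ r n" "a \<in> Poly_Mapping.keys q"
  shows "Poly_Mapping.lookup a (CX i) mod r = Poly_Mapping.lookup a (CY i) mod r"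
proof (cases "i < n")
  case False
  have "\<forall>v \<in> Poly_Mapping.keys a. cidx v < n"
    using assms(2,3) by (auto simp: CZ_def Cn_eq_polys_in polys_in_iff)
  then have "CX i \<notin> Poly_Mapping.keys a" "CY i \<notin> Poly_Mapping.keys a"
    using False by (metis cidx.simps)+
  then show ?thesis
    by (simp add: in_keys_iff)
next
  case True
  \<comment> \<open>The torus element acting by a primitive r-th root of unity on X_i and by its inverse
    on Y_i scales the monomial a by that root to the power a(X_i) - a(Y_i).\<close>
  define \<omega> where "\<omega> = cis (2 * pi / r)"
  define \<zeta> where "\<zeta> = (\<lambda>j. if j = i then \<omega> else 1)"
  have "\<forall>j<n. \<zeta> j ^ r = 1"
    using cis_2pi_div_power assms(1) by (simp add: \<omega>_def \<zeta>_def)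
  then have "gact \<zeta> id q = q"
    using assms(2) by (simp add: CZ_def permutes_id)
  then have "Poly_Mapping.lookup q a = Poly_Mapping.lookup q a * eval_mon (cweight \<zeta>) a"
    using lookup_subst_scaling[of "cweight \<zeta>" q a] by (simp add: gact_eq_subst)
  then have "eval_mon (cweight \<zeta>) a = 1"
    using assms(3) by (simp add: in_keys_iff)
  moreover have "eval_mon (cweight \<zeta>) a = \<omega> ^ Poly_Mapping.lookup a (CX i) * inverse \<omega> ^ Poly_Mapping.lookup a (CY i)"
  proof -
    have "cweight \<zeta> v = 1" if "v \<notin> {CX i, CY i}" for v
      using that by (cases v) (auto simp: \<zeta>_def)
    then have "eval_mon (cweight \<zeta>) a = (\<Prod>v \<in> {CX i, CY i}. cweight \<zeta> v ^ Poly_Mapping.lookup a v)"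
      by (intro eval_mon_supported) auto
    then show ?thesis
      by (simp add: \<zeta>_def)
  qed
  ultimately have "\<omega> ^ Poly_Mapping.lookup a (CX i) / \<omega> ^ Poly_Mapping.lookup a (CY i) = 1"
    by (simp add: power_inverse divide_inverse)
  then have "\<omega> ^ Poly_Mapping.lookup a (CX i) = \<omega> ^ Poly_Mapping.lookup a (CY i)"
    by simp
  then show ?thesis
    unfolding \<omega>_def by (rule cis_power_eq_imp_mod_eq[rotated]) (use assms(1) in simp)
qed

lemma phi_in_Cn:
  assumes "p \<in> Rn n"
  shows "phi r p \<in> Cn n"
  unfolding phi_eq_subst Cn_eq_polys_in
proof (rule polys_in_subst)
  fix v assume "v \<in> vars p"
  then have "ridx v < n"
    using assms by (auto simp: Rn_def)
  then show "phi_var r v \<in> polys_in (\<lambda>v. cidx v < n)"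
    by (cases v) (auto intro!: polys_in_power polys_in_mult polys_in_mvar)
qed

lemma phi_RnS_in_CZ:
  assumes "r \<ge> 1" "p \<in> RnS n"
  shows "phi r p \<in> CZ r n"
  using assms phi_in_Cn gact_phi by (auto simp: RnS_def CZ_def)

lemma map_mon_lift_exp_in_Rn:
  assumes "q \<in> Cn n"
  shows "map_mon (lift_exp r) q \<in> Rn n"
  unfolding Rn_eq_polys_in polys_in_iff
proof (intro ballI)
  fix m w assume "m \<in> Poly_Mapping.keys (map_mon (lift_exp r) q)" "w \<in> Poly_Mapping.keys m"
  then obtain a where "a \<in> Poly_Mapping.keys q" "w \<in> Poly_Mapping.keys (lift_exp r a)"
    using keys_map_mon[of "lift_exp r" q] by blast
  moreover obtain v where "v \<in> Poly_Mapping.keys a" "cidx v = ridx w"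
    using ridx_keys_lift_exp calculation(2) by blast
  ultimately show "ridx w < n"
    using assms by (force simp: Cn_eq_polys_in polys_in_iff)
qed

lemma phi_map_mon_lift_exp:
  assumes "r \<ge> 1" "q \<in> CZ r n"
  shows "phi r (map_mon (lift_exp r) q) = q"
proof -
  have "phi r (map_mon (lift_exp r) q) = map_mon (phi_exp r \<circ> lift_exp r) q"
    by (simp add: phi_eq_map_mon map_mon_map_mon)
  also have "\<dots> = map_mon id q"
    using assms by (intro map_mon_cong) (simp add: phi_exp_lift_exp CZ_exponents_congruent)
  finally show ?thesis
    by simp
qed

lemma CZ_in_phi_RnS:
  assumes "r \<ge> 1" "q \<in> CZ r n"
  shows "q \<in> phi r ` RnS n"
proof
  let ?p = "map_mon (lift_exp r) q"
  have p: "?p \<in> Rn n"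
    using assms(2) by (intro map_mon_lift_exp_in_Rn) (simp add: CZ_def)
  then show "symmetrize n ?p \<in> RnS n"
    by (rule symmetrize_in_RnS)
  have invariant: "phi r (permR \<sigma> ?p) = q" if "\<sigma> permutes {..<n}" for \<sigma>
    using that assms gact_phi[of n "\<lambda>_. 1" r ?p \<sigma>] p
    by (simp add: phi_map_mon_lift_exp CZ_def)
  have "phi r (symmetrize n ?p) = mconst (1 / fact n) * (\<Sum>\<sigma> | \<sigma> permutes {..<n}. phi r (permR \<sigma> ?p))"
    by (simp add: symmetrize_def phi_eq_subst subst_mult subst_sum)
  also have "\<dots> = mconst (1 / fact n) * (\<Sum>\<sigma> | \<sigma> permutes {..<n}. q)"
    using invariant by (intro arg_cong[where f = "(*) _"] sum.cong) auto
  also have "\<dots> = q"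
    by (rule mean_over_permutations)
  finally show "q = phi r (symmetrize n ?p)" ..
qed

theorem proposition1:
  fixes r n :: nat
  assumes "r \<ge> 1" and "n \<ge> 1"
  shows "phi r ` RnS n = CZ r n
       \<and> {p \<in> RnS n. phi r p = 0} = In r n \<inter> RnS n
       \<and> (\<forall>p \<in> Rn n. (\<forall>\<sigma>. \<sigma> permutes {..<n} \<longrightarrow> permR \<sigma> p - p \<in> In r n)
            \<longrightarrow> (\<exists>q \<in> RnS n. p - q \<in> In r n))"
proof (intro conjI ballI impI)
  show "phi r ` RnS n = CZ r n"
    using phi_RnS_in_CZ CZ_in_phi_RnS assms(1) by blast
  have "p \<in> In r n" if "p \<in> Rn n" "phi r p = 0" for p
    using diff_lift_phi_in_In[OF assms(1) that(1)] that(2) by simp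
  then show "{p \<in> RnS n. phi r p = 0} = In r n \<inter> RnS n"
    using phi_vanishes_on_In by (auto simp: RnS_def)
  show "\<exists>q \<in> RnS n. p - q \<in> In r n"
    if "p \<in> Rn n" "\<forall>\<sigma>. \<sigma> permutes {..<n} \<longrightarrow> permR \<sigma> p - p \<in> In r n" for p
    using that symmetrize_in_RnS diff_symmetrize_in_In by blast
qed

end
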